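(* Let $n\ge 2$ and $d\ge 1$ be integers and let $\mathbf{B}=(B_1,\dots,B_d)\in M_n(\mathbb{C})^d$ be a bistochastic tuple. Let $p\geq q\geq 1$. Then \begin{enumerate} \item $h_{S_p}(\mathbf{B})\leq d^{\frac{p-q}{2}}\, h_{S_q}(\mathbf{B})$, and \item $h_{S_p}(\mathbf{B})\geq \big[h_{S_q}(\mathbf{B})\big]^{p/q}$. \end{enumerate} In particular, for every $p,q\in[1,\infty)$ the notions $h_{S_p}$ and $h_{S_q}$ are equivalent: for every $d$ and every sequence $(\mathbf{B}_m)_m$ of bistochastic $d$-tuples (with $\mathbf{B}_m\in M_{n_m}(\mathbb{C})^d$), one has $\inf_m h_{S_p}(\mathbf{B}_m)>0$ if and only if $\inf_m h_{S_q}(\mathbf{B}_m)>0$.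
   Context: A tuple $\mathbf{B}=(B_1,\dots,B_d)\in M_n(\mathbb{C})^d$ is called bistochastic if $\sum_{i=1}^d B_i^*B_i=\sum_{i=1}^d B_iB_i^*=d\cdot \mathrm{Id}$. For a subspace $V$ of $\mathbb{C}^n$ let $P_V$ denote the orthogonal projector onto $V$, and write $B_i|_{V^\perp,V}=P_V B_i(\mathrm{Id}-P_V)$. For $p\in[1,\infty)$, $\|X\|_{S_p}$ denotes the Schatten-$p$ norm of a matrix $X$ (the $\ell_p$ norm of its singular values). The $S_p$ edge expansion of a bistochastic tuple is $$h_{S_p}(\mathbf{B})=\min_{\substack{V \text{ nonzero subspace of } \mathbb{C}^n,\ \dim V\leq n/2}} \frac{\sum_{i=1}^{d}\|B_i|_{V^\perp,V}\|_{S_p}^p}{d\,\dim V}.$$ *)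

theory Defs
  imports "Jordan_Normal_Form.Schur_Decomposition" "Jordan_Normal_Form.DL_Rank"
begin

(* Singular values of X (with multiplicity) are the square roots of the eigenvalues
   of X^* X counted with algebraic multiplicity, i.e. the roots of the characteristic
   polynomial of X^* X with their orders. *)
definition schatten_norm :: "real \<Rightarrow> complex mat \<Rightarrow> real" where
  "schatten_norm p X =
     (let f = char_poly (mat_adjoint X * X)
      in (\<Sum>z \<in> {z. poly f z = 0}. real (order z f) * (sqrt (Re z)) powr p) powr (1 / p))"

definition bistochastic :: "nat \<Rightarrow> nat \<Rightarrow> (nat \<Rightarrow> complex mat) \<Rightarrow> bool" where
  "bistochastic n d B \<longleftrightarrow>
     (\<forall>i<d. B i \<in> carrier_mat n n) \<and>
     (\<forall>j<n. \<forall>k<n. (\<Sum>i<d. (mat_adjoint (B i) * B i) $$ (j, k)) = (if j = k then of_nat d else 0)) \<and>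
     (\<forall>j<n. \<forall>k<n. (\<Sum>i<d. (B i * mat_adjoint (B i)) $$ (j, k)) = (if j = k then of_nat d else 0))"

definition orth_proj :: "nat \<Rightarrow> complex mat \<Rightarrow> bool" where
  "orth_proj n P \<longleftrightarrow> P \<in> carrier_mat n n \<and> P * P = P \<and> mat_adjoint P = P"

definition proj_dim :: "nat \<Rightarrow> complex mat \<Rightarrow> nat" where
  "proj_dim n P = vec_space.rank n P"

(* S_p edge expansion; subspaces V are represented by their orthogonal projectors P_V,
   and B_i|_{V^perp,V} = P_V B_i (Id - P_V) *)
definition edge_expansion :: "real \<Rightarrow> nat \<Rightarrow> nat \<Rightarrow> (nat \<Rightarrow> complex mat) \<Rightarrow> real" where
  "edge_expansion p n d B =
     Inf {(\<Sum>i<d. schatten_norm p (P * B i * (1\<^sub>m n - P)) powr p) / (real d * real (proj_dim n P)) | P.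
            orth_proj n P \<and> proj_dim n P \<noteq> 0 \<and> 2 * proj_dim n P \<le> n}"

end

(* Fix an admissible projector P of rank k and put X_i = P B_i (1 - P). Since
   sum_i B_i^* B_i = d Id, we get |X_i v|^2 <= |B_i (1 - P) v|^2 <= d |v|^2, so all singular
   values of all X_i lie in [0, sqrt d]; and X_i has rank at most k, so it has at most k nonzero
   singular values. Hence the first inequality holds termwise, s^p <= d^((p-q)/2) s^q, and the
   second is Jensen's inequality for t |-> t^(p/q) applied to the numbers s^q, of which at most
   d k (the normalising denominator) are nonzero. Both inequalities survive taking the infimum
   over P, and together they show that one infimum over a sequence is positive iff the other is. *)
theory Submission
  imports
    Defs
    "Jordan_Normal_Form.Jordan_Normal_Form_Uniqueness"
    "Jordan_Normal_Form.Jordan_Normal_Form_Existence"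
    "HOL-Analysis.Convex"
begin

lemma dim_row_mat_adjoint [simp]: "dim_row (mat_adjoint A) = dim_col A"
  unfolding mat_adjoint_def by simp

lemma dim_col_mat_adjoint [simp]: "dim_col (mat_adjoint A) = dim_row A"
  unfolding mat_adjoint_def by simp

lemma mat_adjoint_carrier [simp]: "A \<in> carrier_mat r c \<Longrightarrow> mat_adjoint A \<in> carrier_mat c r"
  by auto

lemma index_mat_adjoint:
  "i < dim_col A \<Longrightarrow> j < dim_row A \<Longrightarrow> mat_adjoint A $$ (i, j) = conjugate (A $$ (j, i))"
  unfolding mat_adjoint_def by (simp add: mat_of_rows_def)

lemma index_mat_adjoint_mult_vec:
  fixes A :: "'a :: conjugatable_field mat"
  assumes A: "A \<in> carrier_mat r c" and w: "w \<in> carrier_vec r" and k: "k < c"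
  shows "(mat_adjoint A *\<^sub>v w) $ k = (\<Sum>i<r. conjugate (A $$ (i, k)) * w $ i)"
  using A w k by (simp add: scalar_prod_def lessThan_atLeast0 index_mat_adjoint)

lemma cscalar_prod_mult_mat_vec:
  fixes A :: "'a :: conjugatable_field mat"
  assumes A: "A \<in> carrier_mat r c" and u: "u \<in> carrier_vec c" and w: "w \<in> carrier_vec r"
  shows "(A *\<^sub>v u) \<bullet>c w = u \<bullet>c (mat_adjoint A *\<^sub>v w)"
proof -
  have "(A *\<^sub>v u) \<bullet>c w = (\<Sum>i<r. \<Sum>k<c. A $$ (i, k) * u $ k * conjugate (w $ i))"
    using A u w by (simp add: scalar_prod_def lessThan_atLeast0 sum_distrib_right)
  also have "\<dots> = (\<Sum>k<c. \<Sum>i<r. A $$ (i, k) * u $ k * conjugate (w $ i))"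
    by (rule sum.swap)
  also have "\<dots> = (\<Sum>k<c. u $ k * conjugate (\<Sum>i<r. conjugate (A $$ (i, k)) * w $ i))"
    by (simp add: sum_conjugate conjugate_dist_mul sum_distrib_left mult.commute mult.left_commute)
  also have "\<dots> = (\<Sum>k<c. u $ k * conjugate ((mat_adjoint A *\<^sub>v w) $ k))"
    using A w by (simp add: index_mat_adjoint_mult_vec del: index_mult_mat_vec)
  also have "\<dots> = u \<bullet>c (mat_adjoint A *\<^sub>v w)"
    using A u by (simp add: scalar_prod_def lessThan_atLeast0 del: index_mult_mat_vec)
  finally show ?thesis .
qed

section \<open>Orthogonal projectors and bistochastic tuples\<close>

lemma orth_proj_pythagoras:
  assumes P: "orth_proj n P" and u: "u \<in> carrier_vec n"
  shows "u \<bullet>c u = (P *\<^sub>v u) \<bullet>c (P *\<^sub>v u) + ((1\<^sub>m n - P) *\<^sub>v u) \<bullet>c ((1\<^sub>m n - P) *\<^sub>v u)"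
proof -
  have Pc: "P \<in> carrier_mat n n" and PP: "P * P = P" and PA: "mat_adjoint P = P"
    using P unfolding orth_proj_def by auto
  define a where "a = P *\<^sub>v u"
  define b where "b = (1\<^sub>m n - P) *\<^sub>v u"
  have a: "a \<in> carrier_vec n" and b: "b \<in> carrier_vec n"
    unfolding a_def b_def using mult_mat_vec_carrier[OF minus_carrier_mat[OF Pc] u] Pc u by auto
  have "b = u - a"
    unfolding a_def b_def using minus_mult_distrib_mat_vec[OF one_carrier_mat Pc u] u by simp
  then have ab: "u = a + b"
    using a u by auto
  have "P *\<^sub>v b = (P * (1\<^sub>m n - P)) *\<^sub>v u"
    unfolding b_def by (rule assoc_mult_mat_vec[symmetric, OF Pc minus_carrier_mat[OF Pc] u])
  also have "P * (1\<^sub>m n - P) = 0\<^sub>m n n"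
    using Pc PP by (simp add: mult_minus_distrib_mat[OF Pc one_carrier_mat Pc])
  finally have Pb: "P *\<^sub>v b = 0\<^sub>v n"
    using u by (auto intro!: eq_vecI simp: scalar_prod_def)
  have ab0: "a \<bullet>c b = 0"
    unfolding a_def using cscalar_prod_mult_mat_vec[OF Pc u b] PA Pb u by simp
  then have ba0: "b \<bullet>c a = 0"
    using a b by (metis conjugate_conjugate_sprod conjugate_vec_sprod_comm conjugate_zero)
  have "u \<bullet>c u = a \<bullet>c a + a \<bullet>c b + (b \<bullet>c a + b \<bullet>c b)"
    unfolding ab using a b
    by (simp add: conjugate_add_vec add_scalar_prod_distrib scalar_prod_add_distrib)
  then show ?thesis
    using ab0 ba0 unfolding a_def b_def by simp
qed

(* Inequalities between complex numbers refer to the partial order of Complex_Order: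
   z \<le> w iff w - z is a nonnegative real. *)
lemma orth_proj_cscalar_le:
  assumes P: "orth_proj n P" and u: "u \<in> carrier_vec n"
  shows "(P *\<^sub>v u) \<bullet>c (P *\<^sub>v u) \<le> u \<bullet>c u"
    and "((1\<^sub>m n - P) *\<^sub>v u) \<bullet>c ((1\<^sub>m n - P) *\<^sub>v u) \<le> u \<bullet>c u"
  using orth_proj_pythagoras[OF P u] by (auto simp: add_increasing add_increasing2)

lemma cscalar_prod_mult_mat_vec_self_expand:
  fixes M :: "'a :: conjugatable_field mat"
  assumes "M \<in> carrier_mat n n" and "w \<in> carrier_vec n"
  shows "w \<bullet>c (M *\<^sub>v w) = (\<Sum>j<n. \<Sum>k<n. w $ j * conjugate (M $$ (j, k)) * conjugate (w $ k))"
  using assms by (simp add: scalar_prod_def lessThan_atLeast0 sum_conjugate conjugate_dist_mul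
      sum_distrib_left mult.assoc)

lemma sum_cscalar_mult_mat_vec_self:
  fixes B :: "nat \<Rightarrow> 'a :: conjugatable_field mat"
  assumes B: "\<And>i. i < d \<Longrightarrow> B i \<in> carrier_mat n n"
    and S: "\<And>j k. j < n \<Longrightarrow> k < n \<Longrightarrow>
      (\<Sum>i<d. (mat_adjoint (B i) * B i) $$ (j, k)) = (if j = k then c else 0)"
    and w: "w \<in> carrier_vec n"
  shows "(\<Sum>i<d. (B i *\<^sub>v w) \<bullet>c (B i *\<^sub>v w)) = conjugate c * (w \<bullet>c w)"
proof -
  define C where "C i = mat_adjoint (B i) * B i" for i
  have quad: "(B i *\<^sub>v w) \<bullet>c (B i *\<^sub>v w) =
      (\<Sum>j<n. \<Sum>k<n. w $ j * conjugate (C i $$ (j, k)) * conjugate (w $ k))" if i: "i < d" for i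
  proof -
    have "(B i *\<^sub>v w) \<bullet>c (B i *\<^sub>v w) = w \<bullet>c (C i *\<^sub>v w)"
      unfolding C_def using B[OF i] w
      by (simp add: cscalar_prod_mult_mat_vec[OF B[OF i] w]
          assoc_mult_mat_vec[OF mat_adjoint_carrier[OF B[OF i]] B[OF i] w])
    also have "\<dots> = (\<Sum>j<n. \<Sum>k<n. w $ j * conjugate (C i $$ (j, k)) * conjugate (w $ k))"
      unfolding C_def
      by (rule cscalar_prod_mult_mat_vec_self_expand[OF mult_carrier_mat[OF mat_adjoint_carrier[OF B[OF i]] B[OF i]] w])
    finally show ?thesis .
  qed
  have "(\<Sum>i<d. (B i *\<^sub>v w) \<bullet>c (B i *\<^sub>v w)) =
      (\<Sum>j<n. \<Sum>k<n. w $ j * conjugate (\<Sum>i<d. C i $$ (j, k)) * conjugate (w $ k))"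
    by (simp add: quad sum_conjugate sum_distrib_left sum_distrib_right sum.swap[of _ "{..<d}"])
  also have "\<dots> = (\<Sum>j<n. \<Sum>k<n. if k = j then w $ j * conjugate c * conjugate (w $ j) else 0)"
    unfolding C_def by (intro sum.cong) (auto simp: S)
  also have "\<dots> = conjugate c * (w \<bullet>c w)"
    using w by (simp add: scalar_prod_def lessThan_atLeast0 sum_distrib_left mult_ac)
  finally show ?thesis .
qed

lemma edge_block_cscalar_le:
  assumes B: "bistochastic n d B" and i: "i < d" and P: "orth_proj n P" and v: "v \<in> carrier_vec n"
  shows "(P * B i * (1\<^sub>m n - P) *\<^sub>v v) \<bullet>c (P * B i * (1\<^sub>m n - P) *\<^sub>v v) \<le> of_nat d * (v \<bullet>c v)"
proof -
  have Pc: "P \<in> carrier_mat n n"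
    using P unfolding orth_proj_def by simp
  have Bc: "\<And>j. j < d \<Longrightarrow> B j \<in> carrier_mat n n"
    using B unfolding bistochastic_def by simp
  have IP: "1\<^sub>m n - P \<in> carrier_mat n n"
    by (rule minus_carrier_mat[OF Pc])
  define w where "w = (1\<^sub>m n - P) *\<^sub>v v"
  have w: "w \<in> carrier_vec n"
    unfolding w_def using IP v by simp
  have "P * B i * (1\<^sub>m n - P) *\<^sub>v v = (P * B i) *\<^sub>v w"
    unfolding w_def by (rule assoc_mult_mat_vec[OF mult_carrier_mat[OF Pc Bc[OF i]] IP v])
  also have "\<dots> = P *\<^sub>v (B i *\<^sub>v w)"
    by (rule assoc_mult_mat_vec[OF Pc Bc[OF i] w])
  finally have "(P * B i * (1\<^sub>m n - P) *\<^sub>v v) \<bullet>c (P * B i * (1\<^sub>m n - P) *\<^sub>v v) \<le> (B i *\<^sub>v w) \<bullet>c (B i *\<^sub>v w)"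
    using orth_proj_cscalar_le(1)[OF P] Bc[OF i] w by simp
  also have "\<dots> \<le> (\<Sum>j<d. (B j *\<^sub>v w) \<bullet>c (B j *\<^sub>v w))"
    using i by (intro member_le_sum) auto
  also have "\<dots> = of_nat d * (w \<bullet>c w)"
    using sum_cscalar_mult_mat_vec_self[OF Bc _ w, where c = "of_nat d"] B unfolding bistochastic_def by simp
  also have "\<dots> \<le> of_nat d * (v \<bullet>c v)"
    unfolding w_def using orth_proj_cscalar_le(2)[OF P v]
    by (intro mult_left_mono) (auto simp: less_eq_complex_def)
  finally show ?thesis .
qed

(* The eigenvalue e is in fact real; only its real part enters schatten_norm. *)
lemma eigenvalue_adjoint_mult_bounds:
  fixes X :: "complex mat"
  assumes X: "X \<in> carrier_mat n n"
    and bound: "\<And>v. v \<in> carrier_vec n \<Longrightarrow> (X *\<^sub>v v) \<bullet>c (X *\<^sub>v v) \<le> of_real c * (v \<bullet>c v)"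
    and e: "eigenvalue (mat_adjoint X * X) e"
  shows "0 \<le> Re e \<and> Re e \<le> c"
proof -
  obtain v where v: "v \<in> carrier_vec n" "v \<noteq> 0\<^sub>v n" and ev: "(mat_adjoint X * X) *\<^sub>v v = e \<cdot>\<^sub>v v"
    using e X unfolding eigenvalue_def eigenvector_def by auto
  have "(X *\<^sub>v v) \<bullet>c (X *\<^sub>v v) = v \<bullet>c ((mat_adjoint X * X) *\<^sub>v v)"
    using X v by (simp add: cscalar_prod_mult_mat_vec[OF X v(1) mult_mat_vec_carrier[OF X v(1)]]
        assoc_mult_mat_vec[OF mat_adjoint_carrier[OF X] X v(1)])
  also have "\<dots> = cnj e * (v \<bullet>c v)"
    using v by (simp add: ev conjugate_smult_vec)
  finally have eq: "(X *\<^sub>v v) \<bullet>c (X *\<^sub>v v) = cnj e * (v \<bullet>c v)" .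
  have r: "Re (v \<bullet>c v) > 0" "Im (v \<bullet>c v) = 0"
    using conjugate_square_greater_0_vec[OF v(1)] v(2) by (auto simp: less_complex_def)
  have "0 \<le> Re e * Re (v \<bullet>c v)" "Re e * Re (v \<bullet>c v) \<le> c * Re (v \<bullet>c v)"
    using conjugate_square_ge_0_vec[of "X *\<^sub>v v"] bound[OF v(1)] r(2) unfolding eq
    by (auto simp: less_eq_complex_def)
  then show ?thesis
    using r(1) by (simp add: zero_le_mult_iff mult_le_cancel_right)
qed

section \<open>Rank and the multiplicity of the eigenvalue zero\<close>

lemma rank_nullity_mat:
  fixes A :: "'a::field mat"
  assumes A: "A \<in> carrier_mat n n"
  shows "kernel_dim A + vec_space.rank n A = n"
proof -
  interpret V: vec_space "TYPE('a)" n .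
  interpret L: linear_map class_ring "module_vec TYPE('a) n" "module_vec TYPE('a) n" "\<lambda>v. A *\<^sub>v v"
    by unfold_locales (use A in \<open>auto simp: LinearCombinations.module_hom_def module_vec_simps
        mult_add_distrib_mat_vec mult_mat_vec\<close>)
  have ker: "L.kerT = mat_kernel A"
    using A by (auto simp: mod_hom.ker_def[OF L.mod_hom_axioms] mat_kernel_def module_vec_simps)
  have im: "L.imT = V.col_space A"
    using A V.col_space_eq[OF A] by (auto simp: mod_hom.im_def[OF L.mod_hom_axioms] module_vec_simps)
  from L.rank_nullity[OF V.fin_dim]
  have "vectorspace.dim class_ring (V.vs (V.col_space A)) + vectorspace.dim class_ring (V.vs (mat_kernel A)) = n"
    unfolding ker im V.dim_is_n .
  then show ?thesis
    unfolding kernel_dim_def V.rank_def V.col_space_def using A by simp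
qed

lemma rank_mult_le_left:
  fixes A C :: "'a::field mat"
  assumes A: "A \<in> carrier_mat n n" and C: "C \<in> carrier_mat n n"
  shows "vec_space.rank n (A * C) \<le> vec_space.rank n A"
proof -
  interpret V: vec_space "TYPE('a)" n .
  have AC: "A * C \<in> carrier_mat n n"
    using A C by simp
  have sub: "V.col_space (A * C) \<subseteq> V.col_space A"
  proof
    fix y assume "y \<in> V.col_space (A * C)"
    then obtain x where x: "x \<in> carrier_vec n" and "y = (A * C) *\<^sub>v x"
      using V.col_space_eq[OF AC] AC by auto
    then have "y = A *\<^sub>v (C *\<^sub>v x)"
      using assoc_mult_mat_vec[OF A C x] by simp
    then show "y \<in> V.col_space A"
      using V.col_space_eq[OF A] A C x by auto
  qed
  have span: "VectorSpace.subspace class_ring (V.col_space M) V.V" if "M \<in> carrier_mat n n" for M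
    unfolding V.col_space_def using that by (intro V.span_is_subspace) (auto simp: cols_def)
  interpret W: vectorspace class_ring "V.vs (V.col_space A)"
    by (rule V.subspace_is_vs[OF span[OF A]])
  have "vectorspace.dim class_ring (W.vs (V.col_space (A * C))) \<le> W.dim"
    using V.fin_dim_span_cols[OF A] V.fin_dim_span_cols[OF AC]
    by (intro W.subspace_dim V.nested_subspaces[OF span[OF A] span[OF AC] sub])
      (simp_all add: V.col_space_def)
  then show ?thesis
    unfolding V.rank_def V.col_space_def by simp
qed

lemma mat_kernel_adjoint_mult_self:
  fixes X :: "complex mat"
  assumes X: "X \<in> carrier_mat r c"
  shows "mat_kernel (mat_adjoint X * X) = mat_kernel X"
proof -
  have XX: "mat_adjoint X * X \<in> carrier_mat c c"
    by (rule mult_carrier_mat[OF mat_adjoint_carrier[OF X] X])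
  show ?thesis
  proof (intro equalityI subsetI)
    fix v assume "v \<in> mat_kernel (mat_adjoint X * X)"
    then have v: "v \<in> carrier_vec c" and "(mat_adjoint X * X) *\<^sub>v v = 0\<^sub>v c"
      using mat_kernelD[OF XX] by auto
    then have "(X *\<^sub>v v) \<bullet>c (X *\<^sub>v v) = 0"
      using X cscalar_prod_mult_mat_vec[OF X v mult_mat_vec_carrier[OF X v]]
      by (simp add: assoc_mult_mat_vec[OF mat_adjoint_carrier[OF X] X v] scalar_prod_def)
    then show "v \<in> mat_kernel X"
      using conjugate_square_eq_0_vec[OF mult_mat_vec_carrier[OF X v]] X v
      by (intro mat_kernelI) auto
  next
    fix v assume "v \<in> mat_kernel X"
    then have v: "v \<in> carrier_vec c" and "X *\<^sub>v v = 0\<^sub>v r"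
      using mat_kernelD[OF X] by auto
    then show "v \<in> mat_kernel (mat_adjoint X * X)"
      using X XX by (intro mat_kernelI)
        (auto simp: assoc_mult_mat_vec[OF mat_adjoint_carrier[OF X] X v] scalar_prod_def intro!: eq_vecI)
  qed
qed

lemma rank_adjoint_mult_self:
  fixes X :: "complex mat"
  assumes X: "X \<in> carrier_mat n n"
  shows "vec_space.rank n (mat_adjoint X * X) = vec_space.rank n X"
proof -
  have XX: "mat_adjoint X * X \<in> carrier_mat n n"
    by (rule mult_carrier_mat[OF mat_adjoint_carrier[OF X] X])
  have "kernel_dim (mat_adjoint X * X) = kernel_dim X"
    using X XX by (simp add: kernel_dim_def mat_kernel_adjoint_mult_self[OF X])
  then show ?thesis
    using rank_nullity_mat[OF X] rank_nullity_mat[OF XX] by linarith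
qed

lemma dim_gen_eigenspace_le_order:
  assumes "jordan_nf A n_as"
  shows "dim_gen_eigenspace A a k \<le> order a (char_poly A)"
proof -
  have "dim_gen_eigenspace A a k = (\<Sum>m\<leftarrow>map fst [(m, e)\<leftarrow>n_as . e = a]. min k m)"
    by (rule dim_gen_eigenspace[OF assms])
  also have "\<dots> \<le> sum_list (map fst (filter (\<lambda>me. snd me = a) n_as))"
    by (induction n_as) auto
  also have "\<dots> = order a (char_poly A)"
    by (rule jordan_nf_order[OF assms, symmetric])
  finally show ?thesis .
qed

lemma order_prod_list_linear:
  fixes es :: "'a::idom list"
  shows "order a (\<Prod>e\<leftarrow>es. [:- e, 1:]) = count_list es a"
proof (induction es)
  case (Cons b es)
  have "[:- b, 1:] * (\<Prod>e\<leftarrow>es. [:- e, 1:]) \<noteq> 0"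
    by (auto simp: prod_list_zero_iff simp del: mult_pCons_left)
  then have "order a (\<Prod>e\<leftarrow>b # es. [:- e, 1:]) = order a [:- b, 1:] + order a (\<Prod>e\<leftarrow>es. [:- e, 1:])"
    unfolding list.map prod_list.Cons by (rule order_mult)
  also have "order a [:- b, 1:] = (if b = a then 1 else 0)"
    using order_linear_power[of a "- b" 1] by (auto simp: eq_neg_iff_add_eq_0 add_eq_0_iff)
  finally show ?case
    using Cons by simp
qed (simp add: order_1_eq_0)

lemma length_filter_nonzero_eigenvalues_le_rank:
  fixes M :: "complex mat"
  assumes M: "M \<in> carrier_mat n n"
    and cp: "char_poly M = (\<Prod>e\<leftarrow>es. [:- e, 1:])" and len: "length es = n"
  shows "length (filter (\<lambda>e. e \<noteq> 0) es) \<le> vec_space.rank n M"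
proof -
  obtain n_as where jnf: "jordan_nf M n_as"
    using jordan_nf_exists[OF M cp] by blast
  have "char_matrix M 0 ^\<^sub>m 1 = M"
    using M by (auto simp: char_matrix_def)
  then have "kernel_dim M = dim_gen_eigenspace M 0 1"
    unfolding dim_gen_eigenspace_def by simp
  also have "\<dots> \<le> count_list es 0"
    using dim_gen_eigenspace_le_order[OF jnf] by (simp add: cp order_prod_list_linear)
  also have "\<dots> = length (filter (\<lambda>e. e = 0) es)"
    by (induction es) auto
  finally have "kernel_dim M \<le> length (filter (\<lambda>e. e = 0) es)" .
  moreover have "length (filter (\<lambda>e. e \<noteq> 0) es) + length (filter (\<lambda>e. e = 0) es) = n"
    using sum_length_filter_compl[of "\<lambda>e. e = 0" es] len by simp
  ultimately show ?thesis
    using rank_nullity_mat[OF M] by linarith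
qed

section \<open>Singular values of the edge blocks\<close>

lemma sum_of_nat_count_list_mult:
  fixes f :: "'a \<Rightarrow> 'b::comm_semiring_1"
  assumes "finite X" "set xs \<subseteq> X"
  shows "(\<Sum>x\<in>X. of_nat (count_list xs x) * f x) = (\<Sum>x\<leftarrow>xs. f x)"
  using assms(2)
proof (induction xs)
  case (Cons b xs)
  have "of_nat (count_list (b # xs) x) * f x = (if b = x then f x else 0) + of_nat (count_list xs x) * f x"
    for x
    by (simp add: distrib_right)
  then have "(\<Sum>x\<in>X. of_nat (count_list (b # xs) x) * f x) =
      (\<Sum>x\<in>X. if b = x then f x else 0) + (\<Sum>x\<in>X. of_nat (count_list xs x) * f x)"
    by (simp only: sum.distrib)
  also have "(\<Sum>x\<in>X. if b = x then f x else 0) = f b"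
    using Cons.prems assms(1) by (simp add: sum.delta)
  finally show ?case
    using Cons by simp
qed simp


lemma schatten_norm_powr_eq_sum_list:
  assumes p: "p > 0" and cp: "char_poly (mat_adjoint X * X) = (\<Prod>e\<leftarrow>es. [:- e, 1:])"
  shows "schatten_norm p X powr p = (\<Sum>e\<leftarrow>es. sqrt (Re e) powr p)"
proof -
  have roots: "{z. poly (\<Prod>e\<leftarrow>es. [:- e, 1:]) z = 0} = set es"
    by (auto simp: poly_prod_list prod_list_zero_iff)
  have "schatten_norm p X = (\<Sum>e\<leftarrow>es. sqrt (Re e) powr p) powr (1 / p)"
    unfolding schatten_norm_def Let_def cp roots order_prod_list_linear
    by (simp add: sum_of_nat_count_list_mult)
  moreover have "0 \<le> (\<Sum>e\<leftarrow>es. sqrt (Re e) powr p)"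
    by (rule sum_list_nonneg) auto
  ultimately show ?thesis
    using p by (simp add: powr_powr)
qed

lemma edge_block_eigenvalue_bounds:
  assumes B: "bistochastic n d B" and i: "i < d" and P: "orth_proj n P"
    and e: "eigenvalue (mat_adjoint (P * B i * (1\<^sub>m n - P)) * (P * B i * (1\<^sub>m n - P))) e"
  shows "0 \<le> Re e \<and> Re e \<le> real d"
proof (rule eigenvalue_adjoint_mult_bounds[OF _ _ e])
  show "P * B i * (1\<^sub>m n - P) \<in> carrier_mat n n"
    using B i P unfolding bistochastic_def orth_proj_def by auto
qed (use edge_block_cscalar_le[OF B i P] in simp)

lemma edge_block_nonzero_eigenvalues_le_proj_dim:
  assumes B: "bistochastic n d B" and i: "i < d" and P: "orth_proj n P"
    and cp: "char_poly (mat_adjoint (P * B i * (1\<^sub>m n - P)) * (P * B i * (1\<^sub>m n - P))) =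
      (\<Prod>e\<leftarrow>es. [:- e, 1:])"
    and len: "length es = n"
  shows "length (filter (\<lambda>e. e \<noteq> 0) es) \<le> proj_dim n P"
proof -
  have Pc: "P \<in> carrier_mat n n" and Bi: "B i \<in> carrier_mat n n"
    using B i P unfolding bistochastic_def orth_proj_def by auto
  have PB: "P * B i \<in> carrier_mat n n"
    by (rule mult_carrier_mat[OF Pc Bi])
  have X: "P * B i * (1\<^sub>m n - P) \<in> carrier_mat n n"
    by (rule mult_carrier_mat[OF PB minus_carrier_mat[OF Pc]])
  have "length (filter (\<lambda>e. e \<noteq> 0) es)
      \<le> vec_space.rank n (mat_adjoint (P * B i * (1\<^sub>m n - P)) * (P * B i * (1\<^sub>m n - P)))"
    by (rule length_filter_nonzero_eigenvalues_le_rank[OF mult_carrier_mat[OF mat_adjoint_carrier[OF X] X] cp len])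
  also have "\<dots> = vec_space.rank n (P * B i * (1\<^sub>m n - P))"
    by (rule rank_adjoint_mult_self[OF X])
  also have "\<dots> \<le> vec_space.rank n (P * B i)"
    by (rule rank_mult_le_left[OF PB minus_carrier_mat[OF Pc]])
  also have "\<dots> \<le> proj_dim n P"
    unfolding proj_dim_def by (rule rank_mult_le_left[OF Pc Bi])
  finally show ?thesis .
qed

lemma edge_block_singular_values:
  assumes B: "bistochastic n d B" and i: "i < d" and P: "orth_proj n P"
  obtains \<sigma>s :: "real list" where
    "\<And>\<sigma>. \<sigma> \<in> set \<sigma>s \<Longrightarrow> 0 \<le> \<sigma> \<and> \<sigma> \<le> sqrt d"
    "length (filter (\<lambda>\<sigma>. \<sigma> \<noteq> 0) \<sigma>s) \<le> proj_dim n P"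
    "\<And>s. s > 0 \<Longrightarrow> schatten_norm s (P * B i * (1\<^sub>m n - P)) powr s = (\<Sum>\<sigma>\<leftarrow>\<sigma>s. \<sigma> powr s)"
proof -
  define X where "X = P * B i * (1\<^sub>m n - P)"
  have "X \<in> carrier_mat n n"
    using B i P unfolding X_def bistochastic_def orth_proj_def by auto
  then have XX: "mat_adjoint X * X \<in> carrier_mat n n"
    by (intro mult_carrier_mat[OF mat_adjoint_carrier])
  obtain es where cp: "char_poly (mat_adjoint X * X) = (\<Prod>e\<leftarrow>es. [:- e, 1:])" and len: "length es = n"
    using char_poly_factorized[OF XX] by blast
  show ?thesis
  proof
    fix \<sigma> assume "\<sigma> \<in> set (map (\<lambda>e. sqrt (Re e)) es)"
    then obtain e where e: "e \<in> set es" and \<sigma>: "\<sigma> = sqrt (Re e)"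
      by auto
    have "eigenvalue (mat_adjoint X * X) e"
      using e by (simp add: eigenvalue_root_char_poly[OF XX] cp poly_prod_list prod_list_zero_iff)
    then show "0 \<le> \<sigma> \<and> \<sigma> \<le> sqrt d"
      using edge_block_eigenvalue_bounds[OF B i P] unfolding \<sigma> X_def by simp
  next
    have "length (filter (\<lambda>\<sigma>. \<sigma> \<noteq> 0) (map (\<lambda>e. sqrt (Re e)) es)) \<le> length (filter (\<lambda>e. e \<noteq> 0) es)"
      by (induction es) auto
    also have "\<dots> \<le> proj_dim n P"
      using edge_block_nonzero_eigenvalues_le_proj_dim[OF B i P _ len] cp unfolding X_def by blast
    finally show "length (filter (\<lambda>\<sigma>. \<sigma> \<noteq> 0) (map (\<lambda>e. sqrt (Re e)) es)) \<le> proj_dim n P" .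
  next
    fix s :: real assume "s > 0"
    then show "schatten_norm s (P * B i * (1\<^sub>m n - P)) powr s = (\<Sum>\<sigma>\<leftarrow>map (\<lambda>e. sqrt (Re e)) es. \<sigma> powr s)"
      using schatten_norm_powr_eq_sum_list[OF _ cp] unfolding X_def by (simp add: comp_def)
  qed
qed

section \<open>Real inequalities\<close>

lemma powr_le_powr_mult_of_le_sqrt:
  fixes t D p q :: real
  assumes t: "0 \<le> t" "t \<le> sqrt D" and qp: "q \<le> p"
  shows "t powr p \<le> D powr ((p - q) / 2) * t powr q"
proof (cases "t = 0")
  case False
  have "t powr p = t powr (p - q) * t powr q"
    by (simp add: powr_add[symmetric])
  also have "t powr (p - q) \<le> sqrt D powr (p - q)"
    using t qp by (intro powr_mono2) auto
  also have "sqrt D powr (p - q) = D powr ((p - q) / 2)"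
  proof -
    have "0 < sqrt D"
      using t False by linarith
    then show ?thesis
      by (simp add: powr_half_sqrt[symmetric] powr_powr)
  qed
  finally show ?thesis
    by (simp add: mult_right_mono)
qed simp

lemma sum_list_concat: "sum_list (concat xss) = sum_list (map sum_list (xss :: 'a::monoid_add list list))"
  by (induction xss) simp_all

lemma powr_mean_le_sparse:
  fixes xs :: "real list" and r :: real and N :: nat
  assumes nonneg: "\<And>x. x \<in> set xs \<Longrightarrow> 0 \<le> x" and r: "1 \<le> r"
    and support: "length (filter (\<lambda>x. x \<noteq> 0) xs) \<le> N" and N: "0 < N"
  shows "(sum_list xs / N) powr r \<le> (\<Sum>x\<leftarrow>xs. x powr r) / N"
proof -
  define ys where "ys = filter (\<lambda>x. x \<noteq> 0) xs"
  define M where "M = length ys"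
  have drop_zeros: "(\<Sum>y\<leftarrow>ys. f y) = (\<Sum>x\<leftarrow>xs. f x)" if "f 0 = 0" for f :: "real \<Rightarrow> real"
    unfolding ys_def using that by (induction xs) auto
  have ys_pos: "0 < ys ! j" if "j < M" for j
    using nonneg nth_mem[OF that[unfolded M_def]] unfolding ys_def by fastforce
  show ?thesis
  proof (cases "M = 0")
    case True
    moreover have "0 \<le> (\<Sum>x\<leftarrow>xs. x powr r)"
      by (rule sum_list_nonneg) auto
    ultimately show ?thesis
      using drop_zeros[of id] unfolding M_def by simp
  next
    case False
    have "(\<Sum>j<M. (1 / M) *\<^sub>R ys ! j) powr r \<le> (\<Sum>j<M. (1 / M) * (ys ! j) powr r)"
      using False ys_pos by (intro convex_on_sum[OF _ _ powr_convex[OF r]]) auto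
    then have jensen: "(sum_list ys / M) powr r \<le> (\<Sum>y\<leftarrow>ys. y powr r) / M"
      unfolding M_def by (simp add: sum_list_sum_nth atLeast0LessThan sum_divide_distrib[symmetric]
          sum_distrib_left[symmetric])
    have MN: "0 < real M / N" "real M / N \<le> 1"
      using False support N unfolding M_def ys_def by auto
    have "(sum_list xs / N) powr r = (real M / N) powr r * (sum_list ys / M) powr r"
      using False N drop_zeros[of id] by (simp add: powr_mult[symmetric] sum_list_nonneg nonneg)
    also have "\<dots> \<le> (real M / N) * ((\<Sum>y\<leftarrow>ys. y powr r) / M)"
      using MN r jensen by (intro mult_mono powr_le_one_le) auto
    also have "\<dots> = (\<Sum>x\<leftarrow>xs. x powr r) / N"
      using False drop_zeros[of "\<lambda>x. x powr r"] by simp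
    finally show ?thesis .
  qed
qed

lemma powr_mean_le_sparse_sum:
  fixes xss :: "nat \<Rightarrow> real list" and r :: real and k :: nat
  assumes nonneg: "\<And>i x. i < d \<Longrightarrow> x \<in> set (xss i) \<Longrightarrow> 0 \<le> x" and r: "1 \<le> r"
    and support: "\<And>i. i < d \<Longrightarrow> length (filter (\<lambda>x. x \<noteq> 0) (xss i)) \<le> k" and dk: "0 < d * k"
  shows "((\<Sum>i<d. sum_list (xss i)) / (d * k)) powr r \<le> (\<Sum>i<d. \<Sum>x\<leftarrow>xss i. x powr r) / (d * k)"
proof -
  define xs where "xs = concat (map xss [0..<d])"
  have "sum_list xs = (\<Sum>i<d. sum_list (xss i))"
    and "(\<Sum>x\<leftarrow>xs. x powr r) = (\<Sum>i<d. \<Sum>x\<leftarrow>xss i. x powr r)"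
    unfolding xs_def
    by (simp_all add: sum_list_concat map_concat comp_def interv_sum_list_conv_sum_set_nat atLeast0LessThan)
  moreover have "length (filter (\<lambda>x. x \<noteq> 0) xs) \<le> d * k"
  proof -
    have "length (filter (\<lambda>x. x \<noteq> 0) xs) = (\<Sum>i<d. length (filter (\<lambda>x. x \<noteq> 0) (xss i)))"
      unfolding xs_def
      by (simp add: filter_concat length_concat comp_def interv_sum_list_conv_sum_set_nat atLeast0LessThan)
    also have "\<dots> \<le> d * k"
      using sum_mono[of "{..<d}" _ "\<lambda>_. k"] support by simp
    finally show ?thesis .
  qed
  moreover have "\<And>x. x \<in> set xs \<Longrightarrow> 0 \<le> x"
    unfolding xs_def using nonneg by auto
  ultimately show ?thesis
    using powr_mean_le_sparse[OF _ r _ dk, of xs] by simp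
qed

lemma INF_le_mult_INF:
  fixes f g :: "'a \<Rightarrow> real"
  assumes A: "A \<noteq> {}" and c: "0 < c"
    and f: "\<And>x. x \<in> A \<Longrightarrow> 0 \<le> f x" and fg: "\<And>x. x \<in> A \<Longrightarrow> f x \<le> c * g x"
  shows "(INF x\<in>A. f x) \<le> c * (INF x\<in>A. g x)"
proof -
  have "(INF x\<in>A. f x) / c \<le> (INF x\<in>A. g x)"
  proof (rule cINF_greatest[OF A])
    fix x assume x: "x \<in> A"
    have "(INF x\<in>A. f x) \<le> f x"
      using f x by (intro cINF_lower bdd_belowI2) auto
    then show "(INF x\<in>A. f x) / c \<le> g x"
      using fg[OF x] c by (simp add: divide_le_eq mult.commute)
  qed
  then show ?thesis
    using c by (simp add: divide_le_eq mult.commute)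
qed

lemma powr_INF_le_INF:
  fixes f g :: "'a \<Rightarrow> real"
  assumes A: "A \<noteq> {}" and r: "0 \<le> r"
    and g: "\<And>x. x \<in> A \<Longrightarrow> 0 \<le> g x" and gf: "\<And>x. x \<in> A \<Longrightarrow> g x powr r \<le> f x"
  shows "(INF x\<in>A. g x) powr r \<le> (INF x\<in>A. f x)"
proof (rule cINF_greatest[OF A])
  fix x assume x: "x \<in> A"
  have "0 \<le> (INF x\<in>A. g x)"
    using g by (intro cINF_greatest[OF A])
  moreover have "(INF x\<in>A. g x) \<le> g x"
    using g x by (intro cINF_lower bdd_belowI2) auto
  ultimately have "(INF x\<in>A. g x) powr r \<le> g x powr r"
    using r by (intro powr_mono2)
  then show "(INF x\<in>A. g x) powr r \<le> f x"
    using gf[OF x] by linarith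
qed

lemma INF_pos_iff_of_comparable:
  fixes f g :: "'a \<Rightarrow> real"
  assumes A: "A \<noteq> {}" and c: "0 < c" and r: "0 < r"
    and g: "\<And>x. x \<in> A \<Longrightarrow> 0 \<le> g x"
    and fg: "\<And>x. x \<in> A \<Longrightarrow> f x \<le> c * g x" and gf: "\<And>x. x \<in> A \<Longrightarrow> g x powr r \<le> f x"
  shows "0 < (INF x\<in>A. f x) \<longleftrightarrow> 0 < (INF x\<in>A. g x)"
proof
  assume "0 < (INF x\<in>A. f x)"
  also have "(INF x\<in>A. f x) \<le> c * (INF x\<in>A. g x)"
    using fg gf by (intro INF_le_mult_INF[OF A c]) (auto intro: order_trans[OF powr_ge_zero])
  finally show "0 < (INF x\<in>A. g x)"
    using c by (simp add: zero_less_mult_iff)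
next
  assume "0 < (INF x\<in>A. g x)"
  then have "0 < (INF x\<in>A. g x) powr r"
    by simp
  also have "\<dots> \<le> (INF x\<in>A. f x)"
    using r g gf by (intro powr_INF_le_INF[OF A]) auto
  finally show "0 < (INF x\<in>A. f x)" .
qed

definition admissible_projs :: "nat \<Rightarrow> complex mat set" where
  "admissible_projs n = {P. orth_proj n P \<and> proj_dim n P \<noteq> 0 \<and> 2 * proj_dim n P \<le> n}"

definition edge_ratio :: "real \<Rightarrow> nat \<Rightarrow> nat \<Rightarrow> (nat \<Rightarrow> complex mat) \<Rightarrow> complex mat \<Rightarrow> real" where
  "edge_ratio p n d B P =
     (\<Sum>i<d. schatten_norm p (P * B i * (1\<^sub>m n - P)) powr p) / (real d * real (proj_dim n P))"

lemma edge_expansion_eq_INF: "edge_expansion p n d B = (INF P\<in>admissible_projs n. edge_ratio p n d B P)"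
  unfolding edge_expansion_def edge_ratio_def admissible_projs_def by (rule arg_cong[of _ _ Inf]) auto

lemma edge_ratio_nonneg: "0 \<le> edge_ratio p n d B P"
  unfolding edge_ratio_def by (intro divide_nonneg_nonneg sum_nonneg) auto

lemma orth_proj_rank_one_exists:
  assumes n: "0 < n"
  shows "\<exists>P. orth_proj n P \<and> proj_dim n P = 1"
proof -
  define P :: "complex mat" where "P = mat n n (\<lambda>(i, j). if i = 0 \<and> j = 0 then 1 else 0)"
  have Pc: "P \<in> carrier_mat n n"
    unfolding P_def by simp
  interpret V: vec_space "TYPE(complex)" n .
  have "P * P = P"
  proof (rule eq_matI)
    fix i j assume ij: "i < dim_row P" "j < dim_col P"
    then have "(P * P) $$ (i, j) =
        (\<Sum>k<n. (if i = 0 \<and> k = 0 then 1 else 0) * (if k = 0 \<and> j = 0 then 1 else 0))"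
      unfolding P_def by (simp add: scalar_prod_def row_def col_def lessThan_atLeast0)
    also have "\<dots> = (\<Sum>k<n. if k = 0 then (if i = 0 \<and> j = 0 then 1 else 0) else 0)"
      by (intro sum.cong) auto
    also have "\<dots> = P $$ (i, j)"
      using ij n unfolding P_def by simp
    finally show "(P * P) $$ (i, j) = P $$ (i, j)" .
  qed (auto simp: P_def)
  moreover have "mat_adjoint P = P"
  proof (rule eq_matI)
    fix i j assume "i < dim_row P" "j < dim_col P"
    then show "mat_adjoint P $$ (i, j) = P $$ (i, j)"
      using Pc by (auto simp: index_mat_adjoint P_def)
  qed (use Pc in auto)
  moreover have "V.rank P \<le> 1"
    by (rule V.rank_le_1_product_entries[OF Pc,
          of "\<lambda>r. if r = 0 then 1 else 0" "\<lambda>c. if c = 0 then 1 else 0"]) (auto simp: P_def)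
  moreover have "1 \<le> V.rank P"
  proof -
    have "col P 0 = unit_vec n 0"
      unfolding P_def using n by (intro eq_vecI) (auto simp: unit_vec_def)
    moreover have "col P 0 \<in> set (cols P)"
      using n Pc by (simp add: cols_def)
    moreover have "V.lin_indpt {unit_vec n 0}"
    proof (rule V.subset_li_is_li)
      show "V.lin_indpt (set (unit_vecs n))"
        using V.unit_vecs_basis unfolding V.basis_def by auto
      show "{unit_vec n 0} \<subseteq> set (unit_vecs n)"
        using n by (simp add: unit_vecs_def)
    qed
    ultimately show ?thesis
      using V.rank_ge_card_indpt[OF Pc, of "{unit_vec n 0}"] by simp
  qed
  ultimately show ?thesis
    using Pc unfolding orth_proj_def proj_dim_def by (intro exI[of _ P]) auto
qed

lemma admissible_projs_nonempty: "2 \<le> n \<Longrightarrow> admissible_projs n \<noteq> {}"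
  using orth_proj_rank_one_exists[of n] unfolding admissible_projs_def by fastforce

lemma edge_expansion_nonneg: "2 \<le> n \<Longrightarrow> 0 \<le> edge_expansion p n d B"
  unfolding edge_expansion_eq_INF by (intro cINF_greatest admissible_projs_nonempty edge_ratio_nonneg)

lemma edge_ratio_singular_values:
  assumes B: "bistochastic n d B" and P: "orth_proj n P"
  obtains \<sigma>s :: "nat \<Rightarrow> real list" where
    "\<And>i \<sigma>. i < d \<Longrightarrow> \<sigma> \<in> set (\<sigma>s i) \<Longrightarrow> 0 \<le> \<sigma> \<and> \<sigma> \<le> sqrt d"
    "\<And>i. i < d \<Longrightarrow> length (filter (\<lambda>\<sigma>. \<sigma> \<noteq> 0) (\<sigma>s i)) \<le> proj_dim n P"
    "\<And>s. 0 < s \<Longrightarrow>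
      edge_ratio s n d B P = (\<Sum>i<d. \<Sum>\<sigma>\<leftarrow>\<sigma>s i. \<sigma> powr s) / (real d * real (proj_dim n P))"
proof -
  define singular_values where "singular_values i \<sigma>s \<longleftrightarrow>
      (\<forall>\<sigma>\<in>set \<sigma>s. 0 \<le> \<sigma> \<and> \<sigma> \<le> sqrt d) \<and> length (filter (\<lambda>\<sigma>. \<sigma> \<noteq> 0) \<sigma>s) \<le> proj_dim n P \<and>
      (\<forall>s>0. schatten_norm s (P * B i * (1\<^sub>m n - P)) powr s = (\<Sum>\<sigma>\<leftarrow>\<sigma>s. \<sigma> powr s))" for i \<sigma>s
  have "\<forall>i\<in>{..<d}. \<exists>\<sigma>s. singular_values i \<sigma>s"
    using edge_block_singular_values[OF B _ P] unfolding singular_values_def by (metis lessThan_iff)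
  then obtain \<sigma>s where "\<forall>i\<in>{..<d}. singular_values i (\<sigma>s i)"
    by (metis bchoice)
  then show ?thesis
    by (intro that[of \<sigma>s]) (auto simp: singular_values_def edge_ratio_def)
qed

lemma edge_ratio_Schatten_comparison:
  assumes B: "bistochastic n d B" and d: "1 \<le> d" and q: "1 \<le> q" "q \<le> p"
    and P: "P \<in> admissible_projs n"
  shows "edge_ratio p n d B P \<le> real d powr ((p - q) / 2) * edge_ratio q n d B P"
    and "edge_ratio q n d B P powr (p / q) \<le> edge_ratio p n d B P"
proof -
  define k where "k = proj_dim n P"
  have orth: "orth_proj n P" and k: "1 \<le> k"
    using P unfolding admissible_projs_def k_def by auto
  obtain \<sigma>s where bound: "\<And>i \<sigma>. i < d \<Longrightarrow> \<sigma> \<in> set (\<sigma>s i) \<Longrightarrow> 0 \<le> \<sigma> \<and> \<sigma> \<le> sqrt d"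
    and support: "\<And>i. i < d \<Longrightarrow> length (filter (\<lambda>\<sigma>. \<sigma> \<noteq> 0) (\<sigma>s i)) \<le> k"
    and ratio: "\<And>s. 0 < s \<Longrightarrow>
      edge_ratio s n d B P = (\<Sum>i<d. \<Sum>\<sigma>\<leftarrow>\<sigma>s i. \<sigma> powr s) / (real d * real k)"
    using edge_ratio_singular_values[OF B orth, folded k_def] by blast
  define S where "S s = (\<Sum>i<d. \<Sum>\<sigma>\<leftarrow>\<sigma>s i. \<sigma> powr s)" for s
  have N: "0 < real d * real k"
    using d k by simp
  have "S p \<le> (\<Sum>i<d. \<Sum>\<sigma>\<leftarrow>\<sigma>s i. real d powr ((p - q) / 2) * \<sigma> powr q)"
    unfolding S_def using bound q by (intro sum_mono sum_list_mono powr_le_powr_mult_of_le_sqrt) auto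
  also have "\<dots> = real d powr ((p - q) / 2) * S q"
    unfolding S_def by (simp add: sum_distrib_left sum_list_const_mult)
  finally show "edge_ratio p n d B P \<le> real d powr ((p - q) / 2) * edge_ratio q n d B P"
    using q N by (simp add: ratio S_def[symmetric] divide_right_mono)
  have "((\<Sum>i<d. sum_list (map (\<lambda>\<sigma>. \<sigma> powr q) (\<sigma>s i))) / (d * k)) powr (p / q)
      \<le> (\<Sum>i<d. \<Sum>x\<leftarrow>map (\<lambda>\<sigma>. \<sigma> powr q) (\<sigma>s i). x powr (p / q)) / (d * k)"
    using bound support d k q
    by (intro powr_mean_le_sparse_sum) (auto simp: filter_map comp_def)
  then show "edge_ratio q n d B P powr (p / q) \<le> edge_ratio p n d B P"
    using q by (simp add: ratio S_def[symmetric] comp_def powr_powr)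
qed

lemma edge_expansion_Schatten_comparison:
  assumes n: "2 \<le> n" and d: "1 \<le> d" and B: "bistochastic n d B" and q: "1 \<le> q" "q \<le> p"
  shows "edge_expansion p n d B \<le> real d powr ((p - q) / 2) * edge_expansion q n d B"
    and "edge_expansion q n d B powr (p / q) \<le> edge_expansion p n d B"
  unfolding edge_expansion_eq_INF
proof -
  show "(INF P\<in>admissible_projs n. edge_ratio p n d B P)
      \<le> real d powr ((p - q) / 2) * (INF P\<in>admissible_projs n. edge_ratio q n d B P)"
    using d edge_ratio_Schatten_comparison(1)[OF B d q]
    by (intro INF_le_mult_INF admissible_projs_nonempty[OF n] edge_ratio_nonneg) simp_all
  show "(INF P\<in>admissible_projs n. edge_ratio q n d B P) powr (p / q)
      \<le> (INF P\<in>admissible_projs n. edge_ratio p n d B P)"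
    using q edge_ratio_Schatten_comparison(2)[OF B d q]
    by (intro powr_INF_le_INF admissible_projs_nonempty[OF n] edge_ratio_nonneg) simp_all
qed

lemma INF_edge_expansion_pos_iff:
  assumes d: "1 \<le> d" and Bs: "\<And>m. 2 \<le> ns m \<and> bistochastic (ns m) d (Bs m)"
    and p: "1 \<le> p" and q: "1 \<le> q"
  shows "0 < (INF m. edge_expansion p (ns m) d (Bs m)) \<longleftrightarrow> 0 < (INF m. edge_expansion q (ns m) d (Bs m))"
proof -
  have comparable: "0 < (INF m. edge_expansion s (ns m) d (Bs m)) \<longleftrightarrow> 0 < (INF m. edge_expansion t (ns m) d (Bs m))"
    if t: "1 \<le> t" "t \<le> s" for s t
  proof (rule INF_pos_iff_of_comparable)
    show "0 < real d powr ((s - t) / 2)" and "0 < s / t"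
      using d t by simp_all
    fix m
    show "0 \<le> edge_expansion t (ns m) d (Bs m)"
      using Bs edge_expansion_nonneg by blast
    show "edge_expansion s (ns m) d (Bs m) \<le> real d powr ((s - t) / 2) * edge_expansion t (ns m) d (Bs m)"
      and "edge_expansion t (ns m) d (Bs m) powr (s / t) \<le> edge_expansion s (ns m) d (Bs m)"
      using Bs d t by (simp_all add: edge_expansion_Schatten_comparison)
  qed simp
  show ?thesis
  proof (cases "q \<le> p")
    case True
    then show ?thesis
      using comparable[OF q] by blast
  next
    case False
    then show ?thesis
      using comparable[OF p, of q] by simp
  qed
qed

theorem theorem1:
  shows
  "(\<forall>(n::nat) (d::nat) B (p::real) (q::real).
      2 \<le> n \<longrightarrow> 1 \<le> d \<longrightarrow> bistochastic n d B \<longrightarrow> 1 \<le> q \<longrightarrow> q \<le> p \<longrightarrow>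
        edge_expansion p n d B \<le> real d powr ((p - q) / 2) * edge_expansion q n d B \<and>
        edge_expansion p n d B \<ge> (edge_expansion q n d B) powr (p / q))
   \<and>
   (\<forall>(p::real) (q::real) (d::nat) (ns::nat \<Rightarrow> nat) (Bs::nat \<Rightarrow> nat \<Rightarrow> complex mat).
      1 \<le> p \<longrightarrow> 1 \<le> q \<longrightarrow> 1 \<le> d \<longrightarrow>
      (\<forall>m. 2 \<le> ns m \<and> bistochastic (ns m) d (Bs m)) \<longrightarrow>
        ((INF m. edge_expansion p (ns m) d (Bs m)) > 0 \<longleftrightarrow>
         (INF m. edge_expansion q (ns m) d (Bs m)) > 0))"
proof (intro conjI allI impI)
  fix n d :: nat and B and p q :: real
  assume "2 \<le> n" "1 \<le> d" "bistochastic n d B" "1 \<le> q" "q \<le> p"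
  then show "edge_expansion p n d B \<le> real d powr ((p - q) / 2) * edge_expansion q n d B"
    and "edge_expansion p n d B \<ge> (edge_expansion q n d B) powr (p / q)"
    by (rule edge_expansion_Schatten_comparison)+
next
  fix p q :: real and d :: nat and ns :: "nat \<Rightarrow> nat" and Bs :: "nat \<Rightarrow> nat \<Rightarrow> complex mat"
  assume "1 \<le> p" "1 \<le> q" "1 \<le> d" "\<forall>m. 2 \<le> ns m \<and> bistochastic (ns m) d (Bs m)"
  then show "(INF m. edge_expansion p (ns m) d (Bs m)) > 0 \<longleftrightarrow> (INF m. edge_expansion q (ns m) d (Bs m)) > 0"
    by (intro INF_edge_expansion_pos_iff) auto
qed

end
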